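(* Let $K\ge1$, $N\ge1$, $t\in\{0,1,\dots,K\}$, and for each file $i\in\{1,\dots,N\}$ and each subset $\mathcal{S}\subseteq\{1,\dots,K\}$ with $|\mathcal{S}|=t$ let $W_{i,\mathcal{S}}$ be a binary string, all of a common length. For a demand $\boldsymbol{d}=(d_1,\dots,d_K)\in\{1,\dots,N\}^K$ and a subset $\mathcal{A}\subseteq\{1,\dots,K\}$ with $|\mathcal{A}|=t+1$, define $Y_{\mathcal{A}}=\bigoplus_{x\in\mathcal{A}}W_{d_x,\mathcal{A}\setminus\{x\}}$ (bitwise XOR). Let $\mathcal{U}$ be a set of $N_{\mathrm{e}}(\boldsymbol{d})$ users requesting $N_{\mathrm{e}}(\boldsymbol{d})$ distinct files, where $N_{\mathrm{e}}(\boldsymbol{d})$ is the number of distinct entries of $\boldsymbol{d}$. Let $\mathcal{B}\subseteq\{1,\dots,K\}$ with $\mathcal{U}\subseteq\mathcal{B}$ and $|\mathcal{B}|=N_{\mathrm{e}}(\boldsymbol{d})+t+1$, and let $\mathcal{V}_{\mathrm{F}}$ be the family of all subsets $\mathcal{V}\subseteq\mathcal{B}$ such that each file requested in $\boldsymbol{d}$ is requested by exactly one user in $\mathcal{V}$. Then $$\bigoplus_{\mathcal{V}\in\mathcal{V}_{\mathrm{F}}}Y_{\mathcal{B}\setminus\mathcal{V}}=0.$$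
   Context: In the paper the strings $W_{i,\mathcal{S}}$ are the subfiles of the symmetric batch prefetching: file $i$ is split into $\binom{K}{t}$ equal-size parts indexed by the size-$t$ subsets $\mathcal{S}$ of users, and user $k$ caches all $W_{i,\mathcal{S}}$ with $k\in\mathcal{S}$. The users in $\mathcal{U}$ are called leaders. Note $|\mathcal{B}\setminus\mathcal{V}|=t+1$ for every $\mathcal{V}\in\mathcal{V}_{\mathrm{F}}$. *)

theory Defs
  imports Main "HOL-Library.Z2"
begin

text \<open>A binary string of length L is modelled as a function nat \<Rightarrow> bit
  whose positions j \<ge> L are 0; bitwise XOR is addition in the field bit (GF(2)).
  W i S is the subfile W_{i,S}.\<close>

definition Ne :: "nat \<Rightarrow> (nat \<Rightarrow> nat) \<Rightarrow> nat" where
  "Ne K d = card (d ` {1..K})"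

definition Ymsg :: "(nat \<Rightarrow> nat) \<Rightarrow> (nat \<Rightarrow> nat set \<Rightarrow> nat \<Rightarrow> bit) \<Rightarrow> nat set \<Rightarrow> nat \<Rightarrow> bit" where
  "Ymsg d W A j = (\<Sum>x\<in>A. W (d x) (A - {x}) j)"

definition VF :: "nat \<Rightarrow> (nat \<Rightarrow> nat) \<Rightarrow> nat set \<Rightarrow> nat set set" where
  "VF K d B = {V. V \<subseteq> B \<and> (\<forall>f \<in> d ` {1..K}. card {v \<in> V. d v = f} = 1)}"

end

theory Submission
  imports Defs "HOL-Library.Disjoint_Sets"
begin

text \<open>Expanding every Y_{B-V} turns the sum into a sum of W_{d_x, B-V-{x}} over the pairs
  (V, x) with V in V_F and x in B - V. Such a pair is matched with (V', y), where y is the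
  unique user of V requesting the file d_x and V' = V - {y} + {x}: then V' is again in V_F,
  x is the unique user of V' requesting d_y = d_x, and B - V' - {y} = B - V - {x}. This is a
  fixed-point-free involution preserving the summand, so over GF(2) the terms cancel in pairs.
  Neither the leader set U nor the size of B enters the argument.\<close>

definition partner :: "('a \<Rightarrow> 'b) \<Rightarrow> 'a set \<Rightarrow> 'a \<Rightarrow> 'a" where
  "partner d V x = (THE v. v \<in> V \<and> d v = d x)"

definition exchange :: "('a \<Rightarrow> 'b) \<Rightarrow> 'a set \<times> 'a \<Rightarrow> 'a set \<times> 'a" where
  "exchange d = (\<lambda>(V, x). (insert x (V - {partner d V x}), partner d V x))"

lemma partner_eqI:
  assumes "{v \<in> V. d v = d x} = {y}"
  shows "partner d V x = y"
  unfolding partner_def using assms by (intro the_equality) auto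

lemma VF_requesters_singleton:
  assumes "V \<in> VF K d B" "B \<subseteq> {1..K}" "x \<in> B"
  shows "{v \<in> V. d v = d x} = {partner d V x}"
proof -
  have "card {v \<in> V. d v = d x} = 1"
    using assms by (auto simp: VF_def)
  then obtain y where y: "{v \<in> V. d v = d x} = {y}"
    by (metis card_1_singletonE)
  then show ?thesis
    using partner_eqI by metis
qed

lemma VF_exchange:
  assumes V: "V \<in> VF K d B" and y: "{v \<in> V. d v = d x} = {y}" and x: "x \<in> B"
  shows "insert x (V - {y}) \<in> VF K d B"
  unfolding VF_def
proof (intro CollectI conjI ballI)
  show "insert x (V - {y}) \<subseteq> B"
    using V x y by (auto simp: VF_def)
next
  fix f assume f: "f \<in> d ` {1..K}"
  show "card {v \<in> insert x (V - {y}). d v = f} = 1"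
  proof (cases "f = d x")
    case True
    then have "{v \<in> insert x (V - {y}). d v = f} = {x}"
      using y by auto
    then show ?thesis by simp
  next
    case False
    then have "{v \<in> insert x (V - {y}). d v = f} = {v \<in> V. d v = f}"
      using y by auto
    moreover have "card {v \<in> V. d v = f} = 1"
      using V f unfolding VF_def by blast
    ultimately show ?thesis by simp
  qed
qed

lemma exchange_involution:
  assumes V: "V \<in> VF K d B" and BK: "B \<subseteq> {1..K}" and x: "x \<in> B - V"
  defines "y \<equiv> partner d V x"
  shows "exchange d (V, x) = (insert x (V - {y}), y)"
    and "insert x (V - {y}) \<in> VF K d B" and "y \<in> B - insert x (V - {y})"
    and "exchange d (exchange d (V, x)) = (V, x)" and "y \<noteq> x" and "d y = d x"
    and "B - insert x (V - {y}) - {y} = B - V - {x}"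
proof -
  have y_req: "{v \<in> V. d v = d x} = {y}"
    unfolding y_def using VF_requesters_singleton V BK x by blast
  then have yV: "y \<in> V" and dy: "d y = d x" by auto
  show "d y = d x" by (fact dy)
  show "exchange d (V, x) = (insert x (V - {y}), y)"
    by (simp add: exchange_def y_def)
  show "insert x (V - {y}) \<in> VF K d B"
    using VF_exchange V y_req x by blast
  show "y \<noteq> x" "B - insert x (V - {y}) - {y} = B - V - {x}"
    using yV x by auto
  show "y \<in> B - insert x (V - {y})"
    using yV x V by (auto simp: VF_def)
  have "{v \<in> insert x (V - {y}). d v = d y} = {x}"
    using y_req dy by auto
  then have "partner d (insert x (V - {y})) y = x"
    by (rule partner_eqI)
  then show "exchange d (exchange d (V, x)) = (V, x)"
    using yV x by (simp add: exchange_def y_def insert_absorb)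
qed

theorem lemma1:
  fixes K N t L :: nat
    and W :: "nat \<Rightarrow> nat set \<Rightarrow> nat \<Rightarrow> bit"
    and d :: "nat \<Rightarrow> nat"
    and U B :: "nat set"
  assumes "K \<ge> 1" and "N \<ge> 1" and "t \<le> K"
    and len: "\<And>i S j. i \<in> {1..N} \<Longrightarrow> S \<subseteq> {1..K} \<Longrightarrow> card S = t \<Longrightarrow> j \<ge> L \<Longrightarrow> W i S j = 0"
    and dem: "\<And>k. k \<in> {1..K} \<Longrightarrow> d k \<in> {1..N}"
    and U: "U \<subseteq> {1..K}" "card U = Ne K d" "inj_on d U"
    and B: "B \<subseteq> {1..K}" "U \<subseteq> B" "card B = Ne K d + t + 1"
  shows "\<forall>j. (\<Sum>V\<in>VF K d B. Ymsg d W (B - V) j) = 0"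
proof
  fix j
  have "finite B"
    using B(1) finite_subset by blast
  moreover have "VF K d B \<subseteq> Pow B"
    by (auto simp: VF_def)
  ultimately have "finite (VF K d B)"
    by (simp add: finite_subset)
  define g where "g = (\<lambda>(V, x). W (d x) (B - V - {x}) j)"
  have "(\<Sum>V\<in>VF K d B. Ymsg d W (B - V) j) = (\<Sum>V\<in>VF K d B. \<Sum>x\<in>B - V. g (V, x))"
    by (simp add: Ymsg_def g_def)
  also have "\<dots> = (\<Sum>p\<in>Sigma (VF K d B) (\<lambda>V. B - V). g p)"
    using \<open>finite B\<close> \<open>finite (VF K d B)\<close> by (subst sum.Sigma) auto
  also have "\<dots> = 0"
  proof (rule sum_involution_eq_0[where h = "exchange d"], safe)
    fix V x assume "V \<in> VF K d B" "x \<in> B" "x \<notin> V"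
    note ex = exchange_involution[OF \<open>V \<in> VF K d B\<close> B(1), of x]
    show "exchange d (V, x) \<in> Sigma (VF K d B) (\<lambda>V. B - V)"
      using ex \<open>x \<in> B\<close> \<open>x \<notin> V\<close> by auto
    show "exchange d (exchange d (V, x)) = (V, x)"
      using ex \<open>x \<in> B\<close> \<open>x \<notin> V\<close> by auto
    show "exchange d (V, x) = (V, x) \<Longrightarrow> False"
      using ex \<open>x \<in> B\<close> \<open>x \<notin> V\<close> by auto
    have "g (exchange d (V, x)) = g (V, x)"
      using ex \<open>x \<in> B\<close> \<open>x \<notin> V\<close> by (simp add: g_def)
    then show "g (exchange d (V, x)) + g (V, x) = 0"
      by simp
  qed
  finally show "(\<Sum>V\<in>VF K d B. Ymsg d W (B - V) j) = 0" .
qed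

end
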